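(* Let $\gamma<0$ and $\epsilon_{\text{abs}}>0$, and let $\hat g_{+,\gamma}\in\arg\min_{f\in\mathcal{F}}\hat h_{+,\gamma}(f)$. If $\hat h_{+,\gamma}(\hat g_{+,\gamma})\ge0$, then $$\left\{\frac{\hat h_{+,\gamma}(\hat g_{+,\gamma})}{\epsilon_{\text{abs}}}-1\right\}\gamma^{-1}\ge\widehat{MR}(f)$$ for all $f\in\mathcal{F}$ with $\hat e_{\text{orig}}(f)\le\epsilon_{\text{abs}}$; moreover $\widehat{MR}(f)\le|\gamma^{-1}|$ for all $f\in\mathcal{F}$. Additionally, if $\hat h_{+,\gamma}(\hat g_{+,\gamma})\ge0$ and $\hat e_{\text{orig}}(\hat g_{+,\gamma})\le\epsilon_{\text{abs}}$ with at least one of these two inequalities holding with equality, then the displayed inequality holds with equality for $f=\hat g_{+,\gamma}$.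
   Context: Setting: $\mathcal{F}$ a set of prediction models, $L\ge0$ a loss, and a fixed observed sample $(\mathbf{y}_{[i]},\mathbf{X}_{1[i]},\mathbf{X}_{2[i]})$, $i=1,\dots,n$, $n\ge2$. $\hat e_{\text{orig}}(f)=\frac1n\sum_iL\{f,(\mathbf{y}_{[i]},\mathbf{X}_{1[i]},\mathbf{X}_{2[i]})\}$; $\hat e_{\text{switch}}(f)=\frac1{n(n-1)}\sum_i\sum_{j\ne i}L\{f,(\mathbf{y}_{[j]},\mathbf{X}_{1[i]},\mathbf{X}_{2[j]})\}$; $\widehat{MR}(f)=\hat e_{\text{switch}}(f)/\hat e_{\text{orig}}(f)$. For $\gamma\in\mathbb{R}$, $\hat h_{+,\gamma}(f):=\hat e_{\text{orig}}(f)+\gamma\hat e_{\text{switch}}(f)$. Standing assumptions: $\min_{f\in\mathcal{F}}\hat e_{\text{orig}}(f)>0$ and minimizers of $\hat h_{+,\gamma}$ over $\mathcal{F}$ exist. *)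

theory Defs
  imports Complex_Main
begin

definition e_orig ::
  "('f \<Rightarrow> ('y \<times> 'a \<times> 'b) \<Rightarrow> real) \<Rightarrow> nat \<Rightarrow> (nat \<Rightarrow> 'y) \<Rightarrow> (nat \<Rightarrow> 'a) \<Rightarrow> (nat \<Rightarrow> 'b) \<Rightarrow> 'f \<Rightarrow> real" where
  "e_orig L n y X1 X2 f = (1 / real n) * (\<Sum>i<n. L f (y i, X1 i, X2 i))"

definition e_switch ::
  "('f \<Rightarrow> ('y \<times> 'a \<times> 'b) \<Rightarrow> real) \<Rightarrow> nat \<Rightarrow> (nat \<Rightarrow> 'y) \<Rightarrow> (nat \<Rightarrow> 'a) \<Rightarrow> (nat \<Rightarrow> 'b) \<Rightarrow> 'f \<Rightarrow> real" where
  "e_switch L n y X1 X2 f =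
     (1 / (real n * (real n - 1))) * (\<Sum>i<n. \<Sum>j\<in>{..<n} - {i}. L f (y j, X1 i, X2 j))"

definition MR_hat ::
  "('f \<Rightarrow> ('y \<times> 'a \<times> 'b) \<Rightarrow> real) \<Rightarrow> nat \<Rightarrow> (nat \<Rightarrow> 'y) \<Rightarrow> (nat \<Rightarrow> 'a) \<Rightarrow> (nat \<Rightarrow> 'b) \<Rightarrow> 'f \<Rightarrow> real" where
  "MR_hat L n y X1 X2 f = e_switch L n y X1 X2 f / e_orig L n y X1 X2 f"

definition h_plus ::
  "('f \<Rightarrow> ('y \<times> 'a \<times> 'b) \<Rightarrow> real) \<Rightarrow> nat \<Rightarrow> (nat \<Rightarrow> 'y) \<Rightarrow> (nat \<Rightarrow> 'a) \<Rightarrow> (nat \<Rightarrow> 'b) \<Rightarrow> real \<Rightarrow> 'f \<Rightarrow> real" where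
  "h_plus L n y X1 X2 \<gamma> f = e_orig L n y X1 X2 f + \<gamma> * e_switch L n y X1 X2 f"

end

theory Submission
  imports Defs
begin

text \<open>Minimality of \<open>g\<close> gives \<open>h \<le> e(f) + \<gamma> s(f)\<close> for every \<open>f \<in> F\<close>, where
  \<open>h = h\<^sub>+(g)\<close>, \<open>e = e_orig\<close> and \<open>s = e_switch\<close>. If \<open>h \<ge> 0\<close> and \<open>0 < e(f) \<le> \<epsilon>\<close>, then
  \<open>h/\<epsilon> \<le> h/e(f) \<le> 1 + \<gamma> s(f)/e(f)\<close>, and dividing by \<open>\<gamma> < 0\<close> reverses the inequality;
  dropping \<open>h\<close> instead gives \<open>-\<gamma> s(f) \<le> e(f)\<close>, i.e. \<open>MR(f) \<le> 1/|\<gamma>|\<close>. For \<open>f = g\<close> the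
  first bound is an identity exactly when \<open>h/\<epsilon> = h/e(g)\<close>. The argument only concerns these
  three numbers.\<close>

lemma le_mult_inverse_of_neg:
  fixes a m \<gamma> :: real
  assumes "\<gamma> < 0" and "a \<le> \<gamma> * m"
  shows "m \<le> a * inverse \<gamma>"
proof -
  have "(\<gamma> * m) * inverse \<gamma> \<le> a * inverse \<gamma>"
    using assms by (intro mult_right_mono_neg) auto
  moreover have "(\<gamma> * m) * inverse \<gamma> = m"
    using \<open>\<gamma> < 0\<close> by (simp add: field_simps)
  ultimately show ?thesis
    by simp
qed

lemma ratio_le_of_penalized_bound:
  fixes h e s \<gamma> \<epsilon> :: real
  assumes "\<gamma> < 0" and "h \<ge> 0" and "0 < e" and "e \<le> \<epsilon>" and "h \<le> e + \<gamma> * s"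
  shows "s / e \<le> (h / \<epsilon> - 1) * inverse \<gamma>"
proof (rule le_mult_inverse_of_neg[OF \<open>\<gamma> < 0\<close>])
  have "h / \<epsilon> \<le> h / e"
    using assms by (simp add: frac_le)
  also have "\<dots> \<le> 1 + \<gamma> * (s / e)"
    using assms by (simp add: field_simps)
  finally show "h / \<epsilon> - 1 \<le> \<gamma> * (s / e)"
    by simp
qed

lemma ratio_le_abs_inverse_of_penalized_bound:
  fixes h e s \<gamma> :: real
  assumes "\<gamma> < 0" and "h \<ge> 0" and "0 < e" and "h \<le> e + \<gamma> * s"
  shows "s / e \<le> \<bar>inverse \<gamma>\<bar>"
proof -
  have "- \<gamma> * s \<le> e"
    using assms by linarith
  then have "s / e \<le> 1 / (- \<gamma>)"
    using assms by (simp add: field_simps)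
  then show ?thesis
    using \<open>\<gamma> < 0\<close> by (simp add: divide_inverse)
qed

lemma ratio_eq_of_penalized_value:
  fixes h e s \<gamma> \<epsilon> :: real
  assumes "\<gamma> \<noteq> 0" and "0 < e" and "h = e + \<gamma> * s" and "h = 0 \<or> e = \<epsilon>"
  shows "(h / \<epsilon> - 1) * inverse \<gamma> = s / e"
proof -
  have "h / \<epsilon> = h / e"
    using \<open>h = 0 \<or> e = \<epsilon>\<close> by auto
  also have "\<dots> - 1 = \<gamma> * (s / e)"
    using assms by (simp add: field_simps)
  finally show ?thesis
    using \<open>\<gamma> \<noteq> 0\<close> by (simp add: field_simps)
qed

theorem lemma19:
  fixes F :: "'f set" and L :: "'f \<Rightarrow> ('y \<times> 'a \<times> 'b) \<Rightarrow> real"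
    and n :: nat and y :: "nat \<Rightarrow> 'y" and X1 :: "nat \<Rightarrow> 'a" and X2 :: "nat \<Rightarrow> 'b"
    and \<gamma> \<epsilon> :: real and g :: 'f
  assumes n2: "n \<ge> 2"
    and L_nonneg: "\<And>f z. L f z \<ge> 0"
    and min_exists: "\<exists>f0\<in>F. \<forall>f\<in>F. e_orig L n y X1 X2 f0 \<le> e_orig L n y X1 X2 f"
    and eorig_pos: "\<forall>f\<in>F. e_orig L n y X1 X2 f > 0"
    and gamma_neg: "\<gamma> < 0"
    and eps_pos: "\<epsilon> > 0"
    and g_in: "g \<in> F"
    and g_min: "\<forall>f\<in>F. h_plus L n y X1 X2 \<gamma> g \<le> h_plus L n y X1 X2 \<gamma> f"
  shows "(h_plus L n y X1 X2 \<gamma> g \<ge> 0 \<longrightarrow>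
           (\<forall>f\<in>F. e_orig L n y X1 X2 f \<le> \<epsilon> \<longrightarrow>
              (h_plus L n y X1 X2 \<gamma> g / \<epsilon> - 1) * inverse \<gamma> \<ge> MR_hat L n y X1 X2 f)
           \<and> (\<forall>f\<in>F. MR_hat L n y X1 X2 f \<le> \<bar>inverse \<gamma>\<bar>))
         \<and> ((h_plus L n y X1 X2 \<gamma> g \<ge> 0 \<and> e_orig L n y X1 X2 g \<le> \<epsilon>
              \<and> (h_plus L n y X1 X2 \<gamma> g = 0 \<or> e_orig L n y X1 X2 g = \<epsilon>)) \<longrightarrow>
            (h_plus L n y X1 X2 \<gamma> g / \<epsilon> - 1) * inverse \<gamma> = MR_hat L n y X1 X2 g)"
proof -
  let ?h = "h_plus L n y X1 X2 \<gamma> g"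
  let ?e = "e_orig L n y X1 X2" and ?s = "e_switch L n y X1 X2"
  have bound: "?h \<le> ?e f + \<gamma> * ?s f" if "f \<in> F" for f
    using g_min that by (simp add: h_plus_def)
  have "MR_hat L n y X1 X2 f \<le> (?h / \<epsilon> - 1) * inverse \<gamma>"
    if "f \<in> F" and "?h \<ge> 0" and "?e f \<le> \<epsilon>" for f
    unfolding MR_hat_def
    using ratio_le_of_penalized_bound[OF gamma_neg _ _ _ bound] eorig_pos that by blast
  moreover have "MR_hat L n y X1 X2 f \<le> \<bar>inverse \<gamma>\<bar>" if "f \<in> F" and "?h \<ge> 0" for f
    unfolding MR_hat_def
    using ratio_le_abs_inverse_of_penalized_bound[OF gamma_neg _ _ bound] eorig_pos that by blast
  moreover have "(?h / \<epsilon> - 1) * inverse \<gamma> = MR_hat L n y X1 X2 g" if "?h = 0 \<or> ?e g = \<epsilon>"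
    unfolding MR_hat_def
    using ratio_eq_of_penalized_value[of \<gamma> "?e g" ?h "?s g" \<epsilon>] gamma_neg eorig_pos g_in that
    by (simp add: h_plus_def)
  ultimately show ?thesis
    by blast
qed

end
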